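(* Let $k\ge1$, let $p,q_1,\dots,q_k$ be primes with $p<q_1<\cdots<q_k$, and let $a$ be a positive integer. If $p^{a-2}>q_1\cdots q_{k-1}q_k^2$, then $p^a$ reduces to $p^bq_1\cdots q_k$, where $$b=\left\lfloor\frac12\left(a-\frac{\log(q_1\cdots q_{k-1})}{\log p}\right)\right\rfloor$$ (the empty product being $1$).
   Context: For a positive integer $n$, $\mathcal{D}(n)$ is the set of positive divisors of $n$, and $\lambda(n)$ is the least prime factor of $n$ if $n\ge2$, with $\lambda(1)=1$. For positive integers $m,n$, a function $f:\mathcal{D}(n)\to\mathcal{D}(m)$ is called reducing if for all $d,d'\in\mathcal{D}(n)$: (a) $f(d)\le d$; (b) $\frac{m/f(d)}{n/d}\le\min\{1,\ \lambda(m/f(d))/\lambda(n/d)\}$; (c) if $f(d)=2^if(d')$ for some $i\in\mathbb{Z}$, then $d=2^jd'$ for some $j\in\mathbb{Z}$. We say $n$ reduces to $m$ if a reducing function $\mathcal{D}(n)\to\mathcal{D}(m)$ exists. *)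

theory Defs
  imports "HOL-Computational_Algebra.Primes" Complex_Main
begin

definition divisors_set :: "nat \<Rightarrow> nat set" where
  "divisors_set n = {d. 0 < d \<and> d dvd n}"

definition least_pf :: "nat \<Rightarrow> nat" where
  "least_pf n = (if n \<ge> 2 then (LEAST p. prime p \<and> p dvd n) else 1)"

definition reducing :: "nat \<Rightarrow> nat \<Rightarrow> (nat \<Rightarrow> nat) \<Rightarrow> bool" where
  "reducing n m f \<longleftrightarrow>
     (\<forall>d\<in>divisors_set n. f d \<in> divisors_set m) \<and>
     (\<forall>d\<in>divisors_set n. f d \<le> d) \<and>
     (\<forall>d\<in>divisors_set n.
        (real (m div f d) / real (n div d))
          \<le> min 1 (real (least_pf (m div f d)) / real (least_pf (n div d)))) \<and>
     (\<forall>d\<in>divisors_set n. \<forall>d'\<in>divisors_set n.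
        (\<exists>i::int. real (f d) = 2 powi i * real (f d')) \<longrightarrow>
        (\<exists>j::int. real d = 2 powi j * real d'))"

definition reduces_to :: "nat \<Rightarrow> nat \<Rightarrow> bool" where
  "reduces_to n m \<longleftrightarrow> (\<exists>f. reducing n m f)"

end

theory Submission
  imports Defs
begin

(*
  The divisors of p^a are the powers p^e, so a map f from them to the divisors of m is
  described by the cofactors M c = m / f(p^(a-c)), c <= a. If every prime factor of m is at
  least p, then f is reducing as soon as each M c divides m, M c <= p^c, m <= p^(a-c) * M c,
  and M is injective: for p = 2 any two divisors of p^a differ by a power of 2, and for odd p
  the number m is odd, hence so are the values of f, and the 2-power condition amounts to
  injectivity.

  For m = p^b * Q with Q = q_1 ... q_k put D_i = q_1 ... q_i, e_i = ceil(log_p D_i) for i < k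
  and e_k = a - b, and on the window e_i <= c <= e_i + b take M c = p^(c - e_i) * D_i. This is
  injective because p does not divide D_i and the D_i are distinct. The choice of b means
  p^(2b) * P <= p^a < p^(2b+2) * P with P = q_1 ... q_(k-1). Together with
  P * q_k^2 < p^(a-2) this gives q_k < p^b, so consecutive windows leave no gap, and
  p^(b+1) * Q < p^a, which yields the size bounds on M; the upper bound on p^a closes the gap
  between the last two windows.
*)

lemma least_pf_prime_power:
  fixes p :: nat
  assumes "prime p" "c \<ge> 1"
  shows "least_pf (p ^ c) = p"
proof -
  have "p \<le> p ^ c"
    using assms(2) prime_ge_1_nat[OF assms(1)] by (simp add: self_le_power)
  then have "p ^ c \<ge> 2"
    using prime_ge_2_nat[OF assms(1)] by linarith
  moreover have "(LEAST r. prime r \<and> r dvd p ^ c) = p"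
  proof (rule Least_equality)
    show "prime p \<and> p dvd p ^ c"
      using assms by (simp add: dvd_power)
    show "\<And>r. prime r \<and> r dvd p ^ c \<Longrightarrow> p \<le> r"
      using assms by (metis order.refl prime_dvd_power primes_dvd_imp_eq)
  qed
  ultimately show ?thesis
    unfolding least_pf_def by simp
qed

lemma least_pf_ge:
  fixes n p :: nat
  assumes "n \<ge> 2" "\<And>r. prime r \<Longrightarrow> r dvd n \<Longrightarrow> p \<le> r"
  shows "p \<le> least_pf n"
proof -
  have "\<exists>r. prime r \<and> r dvd n"
    using assms(1) prime_factor_nat[of n] by auto
  then have "prime (LEAST r. prime r \<and> r dvd n) \<and> (LEAST r. prime r \<and> r dvd n) dvd n"
    by (rule LeastI_ex)
  then show ?thesis
    using assms unfolding least_pf_def by auto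
qed

lemma ratio_le_least_pf_ratio:
  fixes p c n :: nat
  assumes "prime p" "0 < n" "n \<le> p ^ c" "\<And>r. prime r \<Longrightarrow> r dvd n \<Longrightarrow> p \<le> r"
  shows "real n / real (p ^ c) \<le> min 1 (real (least_pf n) / real (least_pf (p ^ c)))"
proof (cases "c = 0")
  case True
  then show ?thesis
    using assms(2,3) by (simp add: least_pf_def)
next
  case False
  have p: "p > 1"
    using assms(1) prime_gt_1_nat by blast
  have le1: "real n / real (p ^ c) \<le> 1"
    using assms(3) p by simp
  have "real n / real (p ^ c) \<le> real (least_pf n) / real p"
  proof (cases "n = 1")
    case True
    have "p \<le> p ^ c"
      using False p by (simp add: self_le_power)
    then have "1 / real (p ^ c) \<le> 1 / real p"
      using p by (intro frac_le) auto
    then show ?thesis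
      using True by (simp add: least_pf_def)
  next
    case False
    then have "p \<le> least_pf n"
      using assms(2,4) by (intro least_pf_ge) auto
    then have "1 \<le> real (least_pf n) / real p"
      using p by simp
    then show ?thesis
      using le1 by linarith
  qed
  then show ?thesis
    using le1 least_pf_prime_power[OF assms(1)] False by simp
qed

lemma odd_eq_if_eq_two_powi_mult:
  fixes x y :: nat and i :: int
  assumes "real x = 2 powi i * real y" "odd x" "odd y"
  shows "x = y"
proof (cases "i \<ge> 0")
  case True
  then obtain n where "i = int n"
    using nonneg_int_cases by blast
  then have "real x = real (2 ^ n * y)"
    using assms(1) by (simp add: power_int_of_nat)
  then have "x = 2 ^ n * y"
    by (simp only: of_nat_eq_iff)
  then show ?thesis
    using assms(2) by (cases n) auto
next
  case False
  then obtain n where "i = - int n"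
    by (metis nonpos_int_cases linorder_not_le less_imp_le)
  then have "real y = real (2 ^ n * x)"
    using assms(1) by (simp add: power_int_minus field_simps)
  then have "y = 2 ^ n * x"
    by (simp only: of_nat_eq_iff)
  then show ?thesis
    using assms(3) by (cases n) auto
qed

lemma two_power_eq_two_powi_mult: "\<exists>j::int. real (2 ^ e) = 2 powi j * real (2 ^ e' :: nat)"
proof
  show "real (2 ^ e) = 2 powi (int e - int e') * real (2 ^ e' :: nat)"
    by (simp add: power_int_diff power_int_of_nat)
qed

lemma prime_power_mult_eqD:
  fixes p :: nat
  assumes "prime p" "p ^ j * x = p ^ j' * x'" "\<not> p dvd x" "\<not> p dvd x'"
  shows "j = j' \<and> x = x'"
proof -
  have "x \<noteq> 0" "x' \<noteq> 0"
    using assms(3,4) by (metis dvd_0_right)+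
  then have "multiplicity p (p ^ j * x) = j" "multiplicity p (p ^ j' * x') = j'"
    using assms(1,3,4) by (simp_all add: prime_elem_multiplicity_mult_distrib not_dvd_imp_multiplicity_0)
  then have "j = j'"
    using assms(2) by simp
  with assms(1,2) show ?thesis
    by (simp add: prime_gt_0_nat)
qed

lemma divisors_set_prime_power:
  fixes p :: nat
  assumes "prime p"
  shows "divisors_set (p ^ a) = (\<lambda>e. p ^ e) ` {..a}"
  using assms by (auto simp: divisors_set_def divides_primepow_nat prime_gt_0_nat)

lemma reducing_prime_powerI:
  fixes p a m :: nat and f :: "nat \<Rightarrow> nat"
  assumes p: "prime p"
    and "\<And>e. e \<le> a \<Longrightarrow> f (p ^ e) \<in> divisors_set m"
    and "\<And>e. e \<le> a \<Longrightarrow> f (p ^ e) \<le> p ^ e"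
    and "\<And>e. e \<le> a \<Longrightarrow> real (m div f (p ^ e)) / real (p ^ (a - e))
           \<le> min 1 (real (least_pf (m div f (p ^ e))) / real (least_pf (p ^ (a - e))))"
    and "\<And>e e'. e \<le> a \<Longrightarrow> e' \<le> a \<Longrightarrow> \<exists>i::int. real (f (p ^ e)) = 2 powi i * real (f (p ^ e'))
           \<Longrightarrow> \<exists>j::int. real (p ^ e) = 2 powi j * real (p ^ e')"
  shows "reducing (p ^ a) m f"
proof -
  have "p ^ a div p ^ e = p ^ (a - e)" if "e \<le> a" for e
    using that p by (simp add: power_diff prime_gt_0_nat)
  then show ?thesis
    using assms unfolding reducing_def divisors_set_prime_power[OF p] Ball_image_comp by auto
qed

lemma prime_power_reduces_toI:
  fixes p a m :: nat and M :: "nat \<Rightarrow> nat"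
  assumes p: "prime p" and "0 < m"
    and M_dvd: "\<And>c. c \<le> a \<Longrightarrow> M c dvd m"
    and M_le: "\<And>c. c \<le> a \<Longrightarrow> M c \<le> p ^ c"
    and M_ge: "\<And>c. c \<le> a \<Longrightarrow> m \<le> p ^ (a - c) * M c"
    and factors_ge: "\<And>r. prime r \<Longrightarrow> r dvd m \<Longrightarrow> p \<le> r"
    and M_inj: "inj_on M {..a}"
  shows "reduces_to (p ^ a) m"
proof -
  define f where "f d = m div M (a - multiplicity p d)" for d
  have cofactor: "m = M (a - e) * f (p ^ e) \<and> 0 < f (p ^ e)" for e
    using M_dvd[of "a - e"] \<open>0 < m\<close> p by (auto simp: f_def)
  then have f_dvd: "f (p ^ e) dvd m" and quotient: "m div f (p ^ e) = M (a - e)" for e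
    by (metis dvd_triv_right, metis nonzero_mult_div_cancel_right neq0_conv)
  have "reducing (p ^ a) m f"
  proof (rule reducing_prime_powerI[OF p])
    fix e assume "e \<le> a"
    show "f (p ^ e) \<in> divisors_set m"
      using f_dvd cofactor by (simp add: divisors_set_def)
    have "M (a - e) * f (p ^ e) \<le> M (a - e) * p ^ e"
      using M_ge[of "a - e"] cofactor[of e] \<open>e \<le> a\<close> by (simp add: mult.commute)
    then show "f (p ^ e) \<le> p ^ e"
      using cofactor[of e] \<open>0 < m\<close> by (metis mult_le_cancel1 mult_is_0 neq0_conv)
    have "0 < M (a - e)"
      using cofactor[of e] \<open>0 < m\<close> by (metis gr0I mult_zero_left)
    moreover have "p \<le> r" if "prime r" "r dvd M (a - e)" for r
      using that factors_ge M_dvd[of "a - e"] dvd_trans by auto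
    ultimately show "real (m div f (p ^ e)) / real (p ^ (a - e))
        \<le> min 1 (real (least_pf (m div f (p ^ e))) / real (least_pf (p ^ (a - e))))"
      using ratio_le_least_pf_ratio[OF p _ M_le] quotient by simp
  next
    fix e e' assume "e \<le> a" "e' \<le> a"
      and "\<exists>i::int. real (f (p ^ e)) = 2 powi i * real (f (p ^ e'))"
    then obtain i where i: "real (f (p ^ e)) = 2 powi i * real (f (p ^ e'))"
      by blast
    show "\<exists>j::int. real (p ^ e) = 2 powi j * real (p ^ e')"
    proof (cases "p = 2")
      case True
      then show ?thesis
        using two_power_eq_two_powi_mult by simp
    next
      case False
      then have "odd m"
        using factors_ge[OF two_is_prime_nat] prime_ge_2_nat[OF p] by fastforce
      then have "f (p ^ e) = f (p ^ e')"
        using odd_eq_if_eq_two_powi_mult[OF i] f_dvd dvd_trans by blast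
      then have "M (a - e) = M (a - e')"
        using quotient by metis
      then have "e = e'"
        using inj_onD[OF M_inj] \<open>e \<le> a\<close> \<open>e' \<le> a\<close> by fastforce
      then show ?thesis
        by (metis mult_1 power_int_0_right)
    qed
  qed
  then show ?thesis
    unfolding reduces_to_def by blast
qed

lemma interval_chain_covers:
  fixes E :: "nat \<Rightarrow> nat"
  assumes "E 0 \<le> c" "\<And>i. i < k \<Longrightarrow> E (Suc i) \<le> E i + w + 1" "c \<le> E k + w"
  shows "\<exists>i\<le>k. E i \<le> c \<and> c \<le> E i + w"
  using assms(2,3)
proof (induction k)
  case 0
  then show ?case
    using assms(1) by auto
next
  case (Suc k)
  show ?case
  proof (cases "E (Suc k) \<le> c")
    case True
    then show ?thesis
      using Suc.prems(2) by blast
  next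
    case False
    then have "c \<le> E k + w"
      using Suc.prems(1)[of k] by simp
    moreover have "\<And>i. i < k \<Longrightarrow> E (Suc i) \<le> E i + w + 1"
      using Suc.prems(1) by simp
    ultimately obtain i where "i \<le> k" "E i \<le> c" "c \<le> E i + w"
      using Suc.IH by blast
    then show ?thesis
      using le_SucI by blast
  qed
qed

lemma inj_on_power_mult_select:
  fixes p :: nat and idx E D :: "nat \<Rightarrow> nat"
  assumes p: "prime p"
    and idx: "\<And>c. c \<in> C \<Longrightarrow> idx c \<in> I \<and> E (idx c) \<le> c"
    and D_inj: "inj_on D I" and D_ndvd: "\<And>i. i \<in> I \<Longrightarrow> \<not> p dvd D i"
  shows "inj_on (\<lambda>c. p ^ (c - E (idx c)) * D (idx c)) C"
proof (rule inj_onI)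
  fix c c' assume "c \<in> C" "c' \<in> C"
    and "p ^ (c - E (idx c)) * D (idx c) = p ^ (c' - E (idx c')) * D (idx c')"
  then have "c - E (idx c) = c' - E (idx c') \<and> D (idx c) = D (idx c')"
    using idx D_ndvd by (intro prime_power_mult_eqD[OF p]) auto
  moreover from this have "idx c = idx c'"
    using idx \<open>c \<in> C\<close> \<open>c' \<in> C\<close> D_inj by (auto dest: inj_onD)
  moreover have "E (idx c) \<le> c" "E (idx c') \<le> c'"
    using idx \<open>c \<in> C\<close> \<open>c' \<in> C\<close> by auto
  ultimately show "c = c'"
    by (metis le_add_diff_inverse2)
qed

lemma prime_power_reduces_to_staircase:
  fixes p a b k Q :: nat and D E :: "nat \<Rightarrow> nat"
  assumes p: "prime p" and "0 < Q"
    and Q_factors: "\<And>r. prime r \<Longrightarrow> r dvd Q \<Longrightarrow> p < r"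
    and D_dvd: "\<And>i. i \<le> k \<Longrightarrow> D i dvd Q"
    and D_inj: "inj_on D {..k}"
    and D_le: "\<And>i. i \<le> k \<Longrightarrow> D i \<le> p ^ E i"
    and D_ge: "\<And>i. i \<le> k \<Longrightarrow> p ^ (b + E i) * Q \<le> p ^ a * D i"
    and covers: "\<And>c. c \<le> a \<Longrightarrow> \<exists>i\<le>k. E i \<le> c \<and> c \<le> E i + b"
  shows "reduces_to (p ^ a) (p ^ b * Q)"
proof -
  obtain idx where idx: "\<And>c. c \<le> a \<Longrightarrow> idx c \<le> k \<and> E (idx c) \<le> c \<and> c \<le> E (idx c) + b"
    using covers by metis
  have p_ndvd_D: "\<not> p dvd D i" if "i \<le> k" for i
    using Q_factors[OF p] D_dvd[OF that] dvd_trans by blast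
  define M where "M c = p ^ (c - E (idx c)) * D (idx c)" for c
  show ?thesis
  proof (rule prime_power_reduces_toI[OF p, where M = M])
    show "0 < p ^ b * Q"
      using \<open>0 < Q\<close> p by (simp add: prime_gt_0_nat)
  next
    fix c assume c: "c \<le> a"
    note ic = idx[OF c]
    show "M c dvd p ^ b * Q"
      unfolding M_def using ic D_dvd by (intro mult_dvd_mono le_imp_power_dvd) auto
    have "M c \<le> p ^ (c - E (idx c)) * p ^ E (idx c)"
      unfolding M_def using ic D_le by simp
    also have "\<dots> = p ^ c"
      using ic by (simp flip: power_add)
    finally show "M c \<le> p ^ c" .
    have "p ^ E (idx c) * (p ^ b * Q) \<le> p ^ E (idx c) * (p ^ (a - c) * M c)"
    proof -
      have "p ^ E (idx c) * (p ^ b * Q) = p ^ (b + E (idx c)) * Q"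
        by (simp add: power_add)
      also have "\<dots> \<le> p ^ a * D (idx c)"
        using D_ge ic by blast
      also have "\<dots> = p ^ E (idx c) * (p ^ (a - c) * M c)"
        using ic c by (simp add: M_def mult.left_commute flip: power_add)
      finally show ?thesis .
    qed
    then show "p ^ b * Q \<le> p ^ (a - c) * M c"
      using p by (simp add: prime_gt_0_nat)
  next
    fix r assume "prime r" "r dvd p ^ b * Q"
    then show "p \<le> r"
      using Q_factors p by (metis prime_dvd_mult_iff prime_dvd_power primes_dvd_imp_eq order.refl less_imp_le)
  next
    show "inj_on M {..a}"
      unfolding M_def using idx D_inj p_ndvd_D by (intro inj_on_power_mult_select[OF p]) auto
  qed
qed

definition ceil_log :: "nat \<Rightarrow> nat \<Rightarrow> nat" where
  "ceil_log p n = (LEAST x. n \<le> p ^ x)"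

lemma le_power_ceil_log:
  fixes p n :: nat
  assumes "1 < p"
  shows "n \<le> p ^ ceil_log p n"
proof -
  have "n \<le> p ^ n"
    using less_exp[of n] power_mono[of 2 p n] assms by linarith
  then show ?thesis
    unfolding ceil_log_def by (rule LeastI)
qed

lemma ceil_log_le:
  fixes p n x :: nat
  assumes "n \<le> p ^ x"
  shows "ceil_log p n \<le> x"
  unfolding ceil_log_def using assms by (rule Least_le)

lemma power_ceil_log_le:
  fixes p n :: nat
  assumes "1 < p" "0 < n"
  shows "p ^ ceil_log p n \<le> p * n"
proof (cases "ceil_log p n")
  case 0
  then show ?thesis
    using assms by simp
next
  case (Suc x)
  then have "p ^ x < n"
    using ceil_log_le[of n p x] by fastforce
  then show ?thesis
    using Suc assms(1) by simp
qed

lemma ceil_log_le_add: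
  fixes p n n' b :: nat
  assumes "1 < p" "n' \<le> n * p ^ b"
  shows "ceil_log p n' \<le> ceil_log p n + b"
proof (rule ceil_log_le)
  show "n' \<le> p ^ (ceil_log p n + b)"
    using le_power_ceil_log[OF assms(1), of n] assms(2) by (simp add: power_add order.trans)
qed

lemma strict_mono_on_prod_prefix:
  fixes q :: "nat \<Rightarrow> nat"
  assumes "\<And>i. i \<in> {1..k} \<Longrightarrow> 1 < q i"
  shows "strict_mono_on {..k} (\<lambda>i. \<Prod>l\<in>{1..i}. q l)"
proof (rule strict_mono_onI, rule lift_Suc_mono_less_ivl[of "{..<k}" "\<lambda>i. \<Prod>l\<in>{1..i}. q l"])
  fix i assume "i \<in> {..<k}"
  then have "0 < q l" if "l \<in> {1..i}" for l
    using assms[of l] that by simp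
  then have "0 < (\<Prod>l\<in>{1..i}. q l)"
    by (rule prod_pos)
  then show "(\<Prod>l\<in>{1..i}. q l) < (\<Prod>l\<in>{1..Suc i}. q l)"
    using assms[of "Suc i"] \<open>i \<in> {..<k}\<close> by (simp add: prod.cl_ivl_Suc)
qed auto

lemma ceil_log_windows_cover:
  fixes p a b k c :: nat and D E :: "nat \<Rightarrow> nat"
  assumes p: "1 < p" and "0 < k" and "D 0 = 1"
    and E: "\<And>i. i < k \<Longrightarrow> E i = ceil_log p (D i)" "E k = a - b"
    and step: "\<And>i. Suc i < k \<Longrightarrow> D (Suc i) \<le> D i * p ^ b"
    and last: "p ^ a < p ^ (2 * b + 2) * D (k - 1)"
    and "c \<le> a"
  shows "\<exists>i\<le>k. E i \<le> c \<and> c \<le> E i + b"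
proof (rule interval_chain_covers)
  show "E 0 \<le> c"
    using E(1)[OF \<open>0 < k\<close>] \<open>D 0 = 1\<close> ceil_log_le[of 1 p 0] by simp
  show "c \<le> E k + b"
    using \<open>c \<le> a\<close> E(2) by simp
  fix i assume "i < k"
  show "E (Suc i) \<le> E i + b + 1"
  proof (cases "Suc i = k")
    case True
    have "p ^ a < p ^ (2 * b + 2) * p ^ ceil_log p (D i)"
      using last le_power_ceil_log[OF p, of "D i"] True
      by (metis diff_Suc_1 less_le_trans mult_le_mono2)
    then have "a < 2 * b + 2 + ceil_log p (D i)"
      using p power_less_imp_less_exp by (metis power_add)
    then show ?thesis
      using True E \<open>i < k\<close> by simp
  next
    case False
    then have "Suc i < k"
      using \<open>i < k\<close> by simp
    then have "ceil_log p (D (Suc i)) \<le> ceil_log p (D i) + b"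
      by (rule ceil_log_le_add[OF p step])
    then show ?thesis
      using E(1)[of i] E(1)[of "Suc i"] \<open>Suc i < k\<close> by simp
  qed
qed

lemma exponent_gap_if_power_mult_less:
  fixes p a b Q :: nat
  assumes "1 < p" "0 < Q" "p ^ (b + 1) * Q < p ^ a"
  shows "b < a \<and> Q < p ^ (a - b)"
proof -
  have "p ^ (b + 1) < p ^ a"
    using assms(2,3) by (metis le_less_trans mult.right_neutral mult_le_mono2 Suc_leI One_nat_def)
  then have "b + 1 < a"
    using assms(1) power_less_imp_less_exp by blast
  then have "p ^ b * (p * Q) < p ^ b * p ^ (a - b)"
    using assms(3) by (simp add: ac_simps flip: power_add)
  then have "p * Q < p ^ (a - b)"
    by simp
  moreover have "Q \<le> p * Q"
    using assms(1) by simp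
  ultimately show ?thesis
    using \<open>b + 1 < a\<close> by linarith
qed

lemma prime_power_reduces_to_mult_prod_primes:
  fixes p a b k :: nat and q :: "nat \<Rightarrow> nat"
  assumes p: "prime p" and "1 \<le> k"
    and q: "\<And>i. i \<in> {1..k} \<Longrightarrow> prime (q i) \<and> p < q i \<and> q i \<le> p ^ b"
    and upper: "p ^ (b + 1) * (\<Prod>i\<in>{1..k}. q i) < p ^ a"
    and lower: "p ^ a < p ^ (2 * b + 2) * (\<Prod>i\<in>{1..<k}. q i)"
  shows "reduces_to (p ^ a) (p ^ b * (\<Prod>i\<in>{1..k}. q i))"
proof -
  define Q where "Q = (\<Prod>i\<in>{1..k}. q i)"
  define D where "D i = (\<Prod>l\<in>{1..i}. q l)" for i
  define E where "E i = (if i = k then a - b else ceil_log p (D i))" for i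
  have p1: "1 < p"
    using p prime_gt_1_nat by blast
  have upper_Q: "p ^ (b + 1) * Q < p ^ a"
    using upper unfolding Q_def .
  have D_pos: "0 < D i" if "i \<le> k" for i
    unfolding D_def using q that by (intro prod_pos) force
  have "0 < Q"
    using D_pos[of k] by (simp add: D_def Q_def)
  then have "b < a" and Q_le: "Q \<le> p ^ (a - b)"
    using exponent_gap_if_power_mult_less[OF p1 _ upper_Q] by (auto simp: less_imp_le)
  show ?thesis
    unfolding Q_def[symmetric]
  proof (rule prime_power_reduces_to_staircase[OF p \<open>0 < Q\<close>, where D = D and E = E and k = k])
    fix r assume "prime r" "r dvd Q"
    then obtain i where "i \<in> {1..k}" "r dvd q i"
      unfolding Q_def by (auto simp: prime_dvd_prod_iff)
    then show "p < r"
      using q \<open>prime r\<close> by (metis primes_dvd_imp_eq)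
  next
    have "strict_mono_on {..k} D"
      unfolding D_def using q p1 by (intro strict_mono_on_prod_prefix) fastforce
    then show "inj_on D {..k}"
      by (rule strict_mono_on_imp_inj_on)
  next
    fix i assume "i \<le> k"
    then show "D i dvd Q"
      unfolding D_def Q_def by (intro prod_dvd_prod_subset) auto
    show "D i \<le> p ^ E i"
      using le_power_ceil_log[OF p1] Q_le by (simp add: E_def D_def Q_def)
    show "p ^ (b + E i) * Q \<le> p ^ a * D i"
    proof (cases "i = k")
      case True
      then show ?thesis
        using \<open>b < a\<close> by (simp add: E_def D_def Q_def flip: power_add)
    next
      case False
      have "p ^ (b + E i) * Q \<le> p ^ b * (p * D i) * Q"
        using False power_ceil_log_le[OF p1 D_pos[OF \<open>i \<le> k\<close>]] by (simp add: E_def power_add)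
      also have "\<dots> = D i * (p ^ (b + 1) * Q)"
        by (simp add: ac_simps)
      also have "\<dots> \<le> p ^ a * D i"
        using upper_Q by simp
      finally show ?thesis .
    qed
  next
    fix c assume "c \<le> a"
    have "D (k - 1) = (\<Prod>i\<in>{1..<k}. q i)"
      unfolding D_def using \<open>1 \<le> k\<close> by (intro prod.cong) auto
    then have "p ^ a < p ^ (2 * b + 2) * D (k - 1)"
      using lower by simp
    then show "\<exists>i\<le>k. E i \<le> c \<and> c \<le> E i + b"
    proof (rule ceil_log_windows_cover[OF p1, where D = D, rotated -2])
      show "D (Suc i) \<le> D i * p ^ b" if "Suc i < k" for i
        using q[of "Suc i"] that by (simp add: D_def prod.cl_ivl_Suc)
    qed (use \<open>1 \<le> k\<close> \<open>c \<le> a\<close> in \<open>simp_all add: E_def D_def\<close>)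
  qed
qed

lemma floor_half_log_bounds:
  fixes p P a :: nat
  assumes p: "1 < p" and "0 < P" "P \<le> p ^ a"
  defines "b \<equiv> nat \<lfloor>(real a - ln (real P) / ln (real p)) / 2\<rfloor>"
  shows "p ^ (2 * b) * P \<le> p ^ a \<and> p ^ a < p ^ (2 * b + 2) * P"
proof -
  have ln_p: "0 < ln (real p)"
    using p by simp
  have ln_power_mult: "ln (real (p ^ n * P)) = real n * ln (real p) + ln (real P)" for n
    using p \<open>0 < P\<close> by (simp add: ln_mult ln_realpow)
  have ln_power: "ln (real (p ^ n)) = real n * ln (real p)" for n
    using p by (simp add: ln_realpow)
  define x where "x = (real a - ln (real P) / ln (real p)) / 2"
  have "real P \<le> real (p ^ a)"
    using assms(3) by (simp only: of_nat_le_iff)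
  then have "ln (real P) \<le> real a * ln (real p)"
    using \<open>0 < P\<close> p unfolding ln_power[symmetric] by (subst ln_le_cancel_iff) auto
  then have "0 \<le> x"
    using ln_p by (simp add: x_def field_simps)
  then have "real b \<le> x" "x < real b + 1"
    unfolding b_def x_def[symmetric] by linarith+
  then have "real (2 * b) * ln (real p) + ln (real P) \<le> real a * ln (real p)"
    and "real a * ln (real p) < real (2 * b + 2) * ln (real p) + ln (real P)"
    using ln_p by (simp_all add: x_def field_simps)
  then have "ln (real (p ^ (2 * b) * P)) \<le> ln (real (p ^ a))"
    and "ln (real (p ^ a)) < ln (real (p ^ (2 * b + 2) * P))"
    unfolding ln_power_mult ln_power .
  then show ?thesis
    using p \<open>0 < P\<close> by (simp del: of_nat_mult of_nat_power)
qed

lemma square_exponent_bounds: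
  fixes p a b P x :: nat
  assumes "1 < p" "2 \<le> a"
    and "P * x ^ 2 < p ^ (a - 2)"
    and "p ^ (2 * b) * P \<le> p ^ a" "p ^ a < p ^ (2 * b + 2) * P"
  shows "x < p ^ b \<and> p ^ (b + 1) * (P * x) < p ^ a"
proof
  have p_a: "p ^ a = p ^ 2 * p ^ (a - 2)"
    using \<open>2 \<le> a\<close> by (metis le_add_diff_inverse power_add)
  have "p ^ 2 * (P * x ^ 2) < p ^ 2 * (P * (p ^ b) ^ 2)"
  proof -
    have "p ^ 2 * (P * x ^ 2) < p ^ a"
      using assms(1,3) p_a by simp
    also have "\<dots> < p ^ (2 * b + 2) * P"
      by (fact assms(5))
    also have "\<dots> = p ^ 2 * (P * (p ^ b) ^ 2)"
      by (simp add: power_add power_mult power2_eq_square ac_simps)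
    finally show ?thesis .
  qed
  then have "x ^ 2 < (p ^ b) ^ 2"
    by simp
  then show "x < p ^ b"
    using power_less_imp_less_base by blast
  have "(p ^ (b + 1) * (P * x)) ^ 2 = (p ^ (2 * b) * P) * (p ^ 2 * (P * x ^ 2))"
    by (simp add: power_add power_mult_distrib power_mult power2_eq_square ac_simps)
  also have "\<dots> < p ^ a * p ^ a"
  proof (rule mult_le_less_imp_less)
    show "0 < p ^ (2 * b) * P"
      using assms(1,5) by (cases "P = 0") simp_all
  qed (use assms p_a in simp_all)
  also have "\<dots> = (p ^ a) ^ 2"
    by (simp add: power2_eq_square)
  finally show "p ^ (b + 1) * (P * x) < p ^ a"
    using power_less_imp_less_base by blast
qed

lemma of_nat_less_powi_diff_twoD:
  fixes p a n :: nat
  assumes "1 < p" "0 < n" "real n < real p powi (int a - 2)"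
  shows "2 \<le> a \<and> n < p ^ (a - 2)"
proof (cases "2 \<le> a")
  case True
  then have "int a - 2 = int (a - 2)"
    by simp
  then have "real p powi (int a - 2) = real (p ^ (a - 2))"
    by (simp only: power_int_of_nat of_nat_power)
  then show ?thesis
    using True assms(3) by (simp only: of_nat_less_iff)
next
  case False
  then have "int a - 2 = - int (2 - a)"
    by simp
  then have "real p powi (int a - 2) = inverse (real p ^ (2 - a))"
    by (simp only: power_int_minus power_int_of_nat)
  also have "\<dots> \<le> 1"
    using assms(1) by (simp add: inverse_le_1_iff one_le_power)
  finally show ?thesis
    using assms(2,3) by simp
qed

lemma floor_half_log_exponent_bounds:
  fixes p a P x :: nat
  assumes p: "1 < p" and "0 < P" "0 < x" "2 \<le> a" and square: "P * x ^ 2 < p ^ (a - 2)"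
  defines "b \<equiv> nat \<lfloor>(real a - ln (real P) / ln (real p)) / 2\<rfloor>"
  shows "x < p ^ b \<and> p ^ (b + 1) * (P * x) < p ^ a \<and> p ^ a < p ^ (2 * b + 2) * P"
proof -
  have "P \<le> P * x ^ 2"
    using \<open>0 < x\<close> by simp
  also have "\<dots> < p ^ (a - 2)"
    by (fact square)
  also have "\<dots> \<le> p ^ a"
    using p by (simp add: power_increasing)
  finally have "p ^ (2 * b) * P \<le> p ^ a \<and> p ^ a < p ^ (2 * b + 2) * P"
    unfolding b_def using floor_half_log_bounds[OF p \<open>0 < P\<close>] by simp
  then show ?thesis
    using square_exponent_bounds[OF p \<open>2 \<le> a\<close> square] by blast
qed

lemma Suc_mono_ivl_bounds:
  fixes f :: "nat \<Rightarrow> 'a::order"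
  assumes "\<forall>i\<in>{m..<n}. f i < f (Suc i)" "i \<in> {m..n}"
  shows "f m \<le> f i \<and> f i \<le> f n"
  using lift_Suc_mono_le_ivl[of "{m..<n}" f m i] lift_Suc_mono_le_ivl[of "{m..<n}" f i n] assms
  by (auto simp: less_imp_le)

theorem lemma3p9:
  fixes p a k :: nat and q :: "nat \<Rightarrow> nat"
  assumes "k \<ge> 1"
    and "prime p"
    and "\<forall>i\<in>{1..k}. prime (q i)"
    and "p < q 1"
    and "\<forall>i\<in>{1..<k}. q i < q (Suc i)"
    and "a > 0"
    and "real p powi (int a - 2) > real ((\<Prod>i\<in>{1..<k}. q i) * q k ^ 2)"
  shows "reduces_to (p ^ a)
           (p ^ nat \<lfloor>(real a - ln (real (\<Prod>i\<in>{1..<k}. q i)) / ln (real p)) / 2\<rfloor>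
              * (\<Prod>i\<in>{1..k}. q i))"
proof -
  define P where "P = (\<Prod>i\<in>{1..<k}. q i)"
  define b where "b = nat \<lfloor>(real a - ln (real P) / ln (real p)) / 2\<rfloor>"
  have p: "1 < p"
    using assms(2) prime_gt_1_nat by blast
  have q_bounds: "p < q i \<and> q i \<le> q k" if "i \<in> {1..k}" for i
    using Suc_mono_ivl_bounds[OF assms(5) that] assms(4) by simp
  have "0 < P"
    unfolding P_def using q_bounds by (intro prod_pos) force
  have "0 < q k"
    using q_bounds[of k] assms(1) by simp
  have "2 \<le> a" and "P * q k ^ 2 < p ^ (a - 2)"
    using of_nat_less_powi_diff_twoD[OF p _ assms(7)] \<open>0 < P\<close> \<open>0 < q k\<close>
    unfolding P_def by auto
  then have "q k < p ^ b" and upper: "p ^ (b + 1) * (P * q k) < p ^ a"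
    and lower: "p ^ a < p ^ (2 * b + 2) * P"
    using floor_half_log_exponent_bounds[OF p \<open>0 < P\<close> \<open>0 < q k\<close>] unfolding b_def by blast+
  have "reduces_to (p ^ a) (p ^ b * (\<Prod>i\<in>{1..k}. q i))"
  proof (intro prime_power_reduces_to_mult_prod_primes[OF assms(2,1)])
    show "prime (q i) \<and> p < q i \<and> q i \<le> p ^ b" if "i \<in> {1..k}" for i
      using assms(3) q_bounds[OF that] \<open>q k < p ^ b\<close> that by fastforce
    have "(\<Prod>i\<in>{1..k}. q i) = P * q k"
      unfolding P_def using assms(1) by (metis atLeastLessThanSuc_atLeastAtMost prod.atLeastLessThan_Suc)
    then show "p ^ (b + 1) * (\<Prod>i\<in>{1..k}. q i) < p ^ a"
      using upper by simp
    show "p ^ a < p ^ (2 * b + 2) * (\<Prod>i\<in>{1..<k}. q i)"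
      using lower unfolding P_def .
  qed
  then show ?thesis
    unfolding b_def P_def .
qed

end
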